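(* Let $A=(a_{ij})_{1\le i,j\le n}$ be a complex Nekrasov matrix, and let $k\in\{1,\dots,n\}$ be the smallest index such that $a_{kj}=0$ for all $j>k$. Then there exist real numbers $\epsilon_1,\dots,\epsilon_n$ satisfying $$\epsilon_i=0 \text{ for } i=1,\dots,k-1,\qquad 0<\epsilon_i<|a_{ii}|-h_i(A)\ \text{ and }\ \epsilon_i>\sum_{j=k}^{i-1}\frac{|a_{ij}|\,\epsilon_j}{|a_{jj}|}\ \text{ for } i=k,\dots,n$$ (the sum being empty for $i=k$), and for any such numbers the diagonal matrix $S=\mathrm{diag}(s_1,\dots,s_n)$ with $s_i:=\frac{h_i(A)+\epsilon_i}{|a_{ii}|}$ has positive diagonal entries and $AS$ is strictly diagonally dominant by rows.
   Context: For a complex $n\times n$ matrix $A=(a_{ij})$ with $a_{ii}\ne 0$ for all $i$, define recursively $h_1(A):=\sum_{j\ne 1}|a_{1j}|$ and $h_i(A):=\sum_{j=1}^{i-1}|a_{ij}|\frac{h_j(A)}{|a_{jj}|}+\sum_{j=i+1}^{n}|a_{ij}|$ for $i=2,\dots,n$. $A$ is a Nekrasov matrix if $|a_{ii}|>h_i(A)$ for all $i\in\{1,\dots,n\}$. A matrix $B=(b_{ij})$ is strictly diagonally dominant by rows (SDD) if $|b_{ii}|>\sum_{j\ne i}|b_{ij}|$ for all $i$. *)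

theory Defs
  imports Complex_Main
begin

text \<open>Matrices are n x n with 1-based indices i, j in {1..n}, represented as
  functions nat => nat => complex (entries outside the range are irrelevant).\<close>

fun nek_h :: "nat \<Rightarrow> (nat \<Rightarrow> nat \<Rightarrow> complex) \<Rightarrow> nat \<Rightarrow> real" where
  "nek_h n A i =
     (\<Sum>j\<in>{1..<i}. cmod (A i j) * nek_h n A j / cmod (A j j))
     + (\<Sum>j\<in>{i<..n}. cmod (A i j))"

definition nekrasov :: "nat \<Rightarrow> (nat \<Rightarrow> nat \<Rightarrow> complex) \<Rightarrow> bool" where
  "nekrasov n A \<longleftrightarrow> (\<forall>i\<in>{1..n}. A i i \<noteq> 0) \<and> (\<forall>i\<in>{1..n}. cmod (A i i) > nek_h n A i)"

definition sdd :: "nat \<Rightarrow> (nat \<Rightarrow> nat \<Rightarrow> 'a::real_normed_vector) \<Rightarrow> bool" where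
  "sdd n B \<longleftrightarrow> (\<forall>i\<in>{1..n}. norm (B i i) > (\<Sum>j\<in>{1..n}-{i}. norm (B i j)))"

end

theory Submission imports Defs begin

text \<open>Writing \<open>s\<^sub>i = (h\<^sub>i + \<epsilon>\<^sub>i) / |a\<^sub>i\<^sub>i|\<close>, the off-diagonal row sum of \<open>AS\<close> in row \<open>i\<close> equals
  \<open>h\<^sub>i + \<Sum>\<^sub>j\<^sub><\<^sub>i |a\<^sub>i\<^sub>j| \<epsilon>\<^sub>j / |a\<^sub>j\<^sub>j| - \<Sum>\<^sub>j\<^sub>>\<^sub>i |a\<^sub>i\<^sub>j| (1 - s\<^sub>j)\<close>, while the diagonal entry is \<open>h\<^sub>i + \<epsilon>\<^sub>i\<close>.
  Since \<open>s\<^sub>j < 1\<close>, the last sum is nonnegative, and positive for the rows \<open>i < k\<close>, which have a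
  nonzero entry right of the diagonal; for \<open>i \<ge> k\<close> the condition on \<open>\<epsilon>\<^sub>i\<close> gives strictness instead.
  Admissible \<open>\<epsilon>\<close> exist: the triangular system \<open>w\<^sub>i = 1 + \<Sum>\<^sub>j\<^sub>=\<^sub>k\<^sup>i\<^sup>-\<^sup>1 c\<^sub>i\<^sub>j w\<^sub>j\<close> has a positive
  solution, and any small enough multiple of it works.\<close>

declare nek_h.simps[simp del]

lemma nek_h_nonneg: "nek_h n A i \<ge> 0"
proof (induction n A i rule: nek_h.induct)
  case (1 n A i)
  have "(\<Sum>j\<in>{1..<i}. cmod (A i j) * nek_h n A j / cmod (A j j)) \<ge> 0"
    using "1" by (intro sum_nonneg) simp
  moreover have "(\<Sum>j\<in>{i<..n}. cmod (A i j)) \<ge> 0"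
    by (intro sum_nonneg) simp
  ultimately show ?case
    by (subst nek_h.simps) linarith
qed

lemma nek_h_pos:
  assumes "j \<in> {i<..n}" and "A i j \<noteq> 0"
  shows "nek_h n A i > 0"
proof -
  have "(\<Sum>j\<in>{i<..n}. cmod (A i j)) > 0"
    using assms by (intro sum_pos2[of _ j]) auto
  moreover have "(\<Sum>j\<in>{1..<i}. cmod (A i j) * nek_h n A j / cmod (A j j)) \<ge> 0"
    using nek_h_nonneg by (intro sum_nonneg) simp
  ultimately show ?thesis
    by (subst nek_h.simps) simp
qed

fun chain_weight :: "(nat \<Rightarrow> nat \<Rightarrow> real) \<Rightarrow> nat \<Rightarrow> nat \<Rightarrow> real" where
  "chain_weight c k i = 1 + (\<Sum>j\<in>{k..<i}. c i j * chain_weight c k j)"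

declare chain_weight.simps[simp del]

lemma chain_weight_ge_1:
  assumes "\<And>i j. c i j \<ge> 0"
  shows "chain_weight c k i \<ge> 1"
proof (induction i rule: less_induct)
  case (less i)
  have "(\<Sum>j\<in>{k..<i}. c i j * chain_weight c k j) \<ge> 0"
  proof (intro sum_nonneg mult_nonneg_nonneg)
    fix j assume "j \<in> {k..<i}"
    then show "chain_weight c k j \<ge> 0"
      using less by force
  qed (rule assms)
  then show ?case
    by (subst chain_weight.simps) linarith
qed

lemma subdominant_chain_exists:
  fixes c :: "nat \<Rightarrow> nat \<Rightarrow> real" and d :: "nat \<Rightarrow> real"
  assumes c_nonneg: "\<And>i j. c i j \<ge> 0" and d_pos: "\<And>i. i \<in> {k..n} \<Longrightarrow> d i > 0"
  shows "\<exists>\<epsilon>. \<forall>i\<in>{k..n}. 0 < \<epsilon> i \<and> \<epsilon> i < d i \<and> (\<Sum>j\<in>{k..<i}. c i j * \<epsilon> j) < \<epsilon> i"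
proof -
  define w where "w = chain_weight c k"
  have w_ge: "w i \<ge> 1" for i
    unfolding w_def using c_nonneg by (rule chain_weight_ge_1)
  then have w_pos: "w i > 0" for i
    by (rule order_less_le_trans[OF zero_less_one])
  define t where "t = Min (insert 1 ((\<lambda>i. d i / (2 * w i)) ` {k..n}))"
  have t_pos: "t > 0"
    unfolding t_def using d_pos w_pos by (subst Min_gr_iff) (auto intro!: divide_pos_pos)
  have t_le: "t \<le> d i / (2 * w i)" if "i \<in> {k..n}" for i
    unfolding t_def using that by (intro Min_le) auto
  have "\<forall>i\<in>{k..n}. 0 < t * w i \<and> t * w i < d i \<and> (\<Sum>j\<in>{k..<i}. c i j * (t * w j)) < t * w i"
  proof (intro ballI conjI)
    fix i assume i: "i \<in> {k..n}"
    show "0 < t * w i"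
      using t_pos w_ge[of i] by simp
    have "t * w i \<le> d i / (2 * w i) * w i"
      using t_le[OF i] w_ge[of i] by (intro mult_right_mono) auto
    also have "\<dots> = d i / 2"
      using w_ge[of i] by (simp add: field_simps)
    finally show "t * w i < d i"
      using d_pos[OF i] by simp
    have "(\<Sum>j\<in>{k..<i}. c i j * (t * w j)) = t * (w i - 1)"
      unfolding w_def by (subst (2) chain_weight.simps) (simp add: sum_distrib_left ac_simps)
    also have "\<dots> < t * w i"
      using t_pos by simp
    finally show "(\<Sum>j\<in>{k..<i}. c i j * (t * w j)) < t * w i" .
  qed
  then show ?thesis
    by (rule exI[of _ "\<lambda>i. t * w i"])
qed

definition admissible_perturbation ::
    "nat \<Rightarrow> (nat \<Rightarrow> nat \<Rightarrow> complex) \<Rightarrow> nat \<Rightarrow> (nat \<Rightarrow> real) \<Rightarrow> bool" where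
  "admissible_perturbation n A k \<epsilon> \<longleftrightarrow>
     (\<forall>i\<in>{1..<k}. \<epsilon> i = 0) \<and>
     (\<forall>i\<in>{k..n}. 0 < \<epsilon> i \<and> \<epsilon> i < cmod (A i i) - nek_h n A i \<and>
        \<epsilon> i > (\<Sum>j\<in>{k..<i}. cmod (A i j) * \<epsilon> j / cmod (A j j)))"

lemma admissible_perturbation_exists:
  assumes "nekrasov n A" and "1 \<le> k"
  shows "\<exists>\<epsilon>. admissible_perturbation n A k \<epsilon>"
proof -
  have "\<exists>\<epsilon>. \<forall>i\<in>{k..n}. 0 < \<epsilon> i \<and> \<epsilon> i < cmod (A i i) - nek_h n A i \<and>
      (\<Sum>j\<in>{k..<i}. cmod (A i j) / cmod (A j j) * \<epsilon> j) < \<epsilon> i"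
    using assms by (intro subdominant_chain_exists) (auto simp: nekrasov_def)
  then obtain \<epsilon> where \<epsilon>: "\<forall>i\<in>{k..n}. 0 < \<epsilon> i \<and> \<epsilon> i < cmod (A i i) - nek_h n A i \<and>
      (\<Sum>j\<in>{k..<i}. cmod (A i j) * \<epsilon> j / cmod (A j j)) < \<epsilon> i"
    by auto
  let ?\<epsilon>' = "\<lambda>i. if i < k then 0 else \<epsilon> i"
  have "(\<Sum>j\<in>{k..<i}. cmod (A i j) * ?\<epsilon>' j / cmod (A j j))
      = (\<Sum>j\<in>{k..<i}. cmod (A i j) * \<epsilon> j / cmod (A j j))" for i
    by (intro sum.cong) auto
  then have "admissible_perturbation n A k ?\<epsilon>'"
    unfolding admissible_perturbation_def using \<epsilon> by auto
  then show ?thesis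
    by blast
qed

lemma scaled_offdiag_row_sum_eq:
  fixes n i :: nat and A :: "nat \<Rightarrow> nat \<Rightarrow> complex" and \<epsilon> :: "nat \<Rightarrow> real"
  defines "s \<equiv> \<lambda>j. (nek_h n A j + \<epsilon> j) / cmod (A j j)"
  assumes i: "i \<in> {1..n}" and s_nonneg: "\<And>j. j \<in> {1..n} \<Longrightarrow> s j \<ge> 0"
  shows "(\<Sum>j\<in>{1..n}-{i}. norm (A i j * complex_of_real (s j)))
    = nek_h n A i + (\<Sum>j\<in>{1..<i}. cmod (A i j) * \<epsilon> j / cmod (A j j))
      - (\<Sum>j\<in>{i<..n}. cmod (A i j) * (1 - s j))"
proof -
  have split: "{1..n}-{i} = {1..<i} \<union> {i<..n}"
    using i by auto
  have "(\<Sum>j\<in>{1..n}-{i}. norm (A i j * complex_of_real (s j)))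
      = (\<Sum>j\<in>{1..<i} \<union> {i<..n}. cmod (A i j) * s j)"
    unfolding split using i s_nonneg by (intro sum.cong) (auto simp: norm_mult)
  also have "\<dots> = (\<Sum>j\<in>{1..<i}. cmod (A i j) * s j) + (\<Sum>j\<in>{i<..n}. cmod (A i j) * s j)"
    by (intro sum.union_disjoint) auto
  also have "(\<Sum>j\<in>{1..<i}. cmod (A i j) * s j)
      = (\<Sum>j\<in>{1..<i}. cmod (A i j) * nek_h n A j / cmod (A j j))
        + (\<Sum>j\<in>{1..<i}. cmod (A i j) * \<epsilon> j / cmod (A j j))"
    by (simp add: s_def sum.distrib[symmetric] add_divide_distrib distrib_left)
  also have "(\<Sum>j\<in>{i<..n}. cmod (A i j) * s j)
      = (\<Sum>j\<in>{i<..n}. cmod (A i j)) - (\<Sum>j\<in>{i<..n}. cmod (A i j) * (1 - s j))"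
    by (simp add: sum_subtractf[symmetric] algebra_simps)
  finally show ?thesis
    by (subst nek_h.simps) simp
qed

lemma scaled_offdiag_deficit_nonneg:
  fixes i n :: nat and s :: "nat \<Rightarrow> real"
  assumes "\<And>j. j \<in> {i<..n} \<Longrightarrow> s j < 1"
  shows "(\<Sum>j\<in>{i<..n}. cmod (A i j) * (1 - s j)) \<ge> 0"
  using assms by (intro sum_nonneg) (simp add: less_imp_le)

lemma scaled_offdiag_deficit_pos:
  fixes i j n :: nat and s :: "nat \<Rightarrow> real"
  assumes "\<And>j. j \<in> {i<..n} \<Longrightarrow> s j < 1" and "j \<in> {i<..n}" and "A i j \<noteq> 0"
  shows "(\<Sum>j\<in>{i<..n}. cmod (A i j) * (1 - s j)) > 0"
  by (rule sum_pos2[of _ j]) (use assms in \<open>auto simp: less_imp_le\<close>)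

lemma nekrasov_scaling_sdd:
  assumes nek: "nekrasov n A" and k: "1 \<le> k" and adm: "admissible_perturbation n A k \<epsilon>"
    and head_rows: "\<And>i. i \<in> {1..<k} \<Longrightarrow> \<exists>j\<in>{i<..n}. A i j \<noteq> 0"
  defines "s \<equiv> \<lambda>j. (nek_h n A j + \<epsilon> j) / cmod (A j j)"
  shows "\<forall>i\<in>{1..n}. s i > 0" and "sdd n (\<lambda>i j. A i j * complex_of_real (s j))"
proof -
  have diag_pos: "cmod (A i i) > 0" and h_lt: "nek_h n A i < cmod (A i i)" if "i \<in> {1..n}" for i
    using nek that by (auto simp: nekrasov_def)
  have \<epsilon>_head: "\<epsilon> i = 0" if "i \<in> {1..<k}" for i
    using adm that by (simp add: admissible_perturbation_def)
  have \<epsilon>_tail: "0 < \<epsilon> i" "\<epsilon> i < cmod (A i i) - nek_h n A i"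
      "(\<Sum>j\<in>{k..<i}. cmod (A i j) * \<epsilon> j / cmod (A j j)) < \<epsilon> i" if "i \<in> {k..n}" for i
    using adm that by (auto simp: admissible_perturbation_def)
  have num_pos: "nek_h n A i + \<epsilon> i > 0" if i: "i \<in> {1..n}" for i
  proof (cases "i < k")
    case True
    then show ?thesis
      using head_rows[of i] i \<epsilon>_head[of i] by (auto intro: nek_h_pos)
  next
    case False
    then show ?thesis
      using i \<epsilon>_tail(1)[of i] nek_h_nonneg[of n A i] by simp
  qed
  have num_lt: "nek_h n A i + \<epsilon> i < cmod (A i i)" if i: "i \<in> {1..n}" for i
    using h_lt[OF i] \<epsilon>_head[of i] \<epsilon>_tail(2)[of i] i by (cases "i < k") auto
  show s_pos: "\<forall>i\<in>{1..n}. s i > 0"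
    using num_pos diag_pos by (simp add: s_def)
  have s_lt: "s j < 1" if "j \<in> {i<..n}" "i \<ge> 1" for i j
    using num_lt[of j] diag_pos[of j] that by (simp add: s_def)
  show "sdd n (\<lambda>i j. A i j * complex_of_real (s j))"
    unfolding sdd_def
  proof
    fix i assume i: "i \<in> {1..n}"
    let ?lower = "\<Sum>j\<in>{1..<i}. cmod (A i j) * \<epsilon> j / cmod (A j j)"
    let ?deficit = "\<Sum>j\<in>{i<..n}. cmod (A i j) * (1 - s j)"
    have "s i > 0"
      using s_pos i by blast
    then have "norm (A i i * complex_of_real (s i)) = cmod (A i i) * s i"
      by (simp add: norm_mult)
    also have "\<dots> = nek_h n A i + \<epsilon> i"
      using diag_pos[OF i] by (simp add: s_def)
    finally have diag: "norm (A i i * complex_of_real (s i)) = nek_h n A i + \<epsilon> i" .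
    have "?lower - ?deficit < \<epsilon> i"
    proof (cases "i < k")
      case True
      have "?lower = 0"
        using True \<epsilon>_head by (intro sum.neutral) auto
      moreover have "?deficit > 0"
        using head_rows[of i] True i s_lt[of _ i] by (auto intro: scaled_offdiag_deficit_pos)
      ultimately show ?thesis
        using \<epsilon>_head[of i] True i by simp
    next
      case False
      have "?lower = (\<Sum>j\<in>{1..<k}. cmod (A i j) * \<epsilon> j / cmod (A j j))
          + (\<Sum>j\<in>{k..<i}. cmod (A i j) * \<epsilon> j / cmod (A j j))"
        using False k by (simp add: sum.atLeastLessThan_concat)
      also have "(\<Sum>j\<in>{1..<k}. cmod (A i j) * \<epsilon> j / cmod (A j j)) = 0"
        using \<epsilon>_head by (intro sum.neutral) auto
      finally have "?lower < \<epsilon> i"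
        using \<epsilon>_tail(3)[of i] False i by simp
      moreover have "?deficit \<ge> 0"
        using i s_lt[of _ i] by (intro scaled_offdiag_deficit_nonneg) auto
      ultimately show ?thesis
        by simp
    qed
    moreover have "(\<Sum>j\<in>{1..n}-{i}. norm (A i j * complex_of_real (s j)))
        = nek_h n A i + ?lower - ?deficit"
      unfolding s_def
      by (rule scaled_offdiag_row_sum_eq[OF i]) (use s_pos in \<open>simp add: s_def less_imp_le\<close>)
    ultimately show "(\<Sum>j\<in>{1..n}-{i}. norm (A i j * complex_of_real (s j)))
        < norm (A i i * complex_of_real (s i))"
      unfolding diag by linarith
  qed
qed

theorem theorem2p2:
  fixes n :: nat and A :: "nat \<Rightarrow> nat \<Rightarrow> complex" and k :: nat
  assumes "n \<ge> 1"
    and "nekrasov n A"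
    and "k = (LEAST k. 1 \<le> k \<and> k \<le> n \<and> (\<forall>j\<in>{k<..n}. A k j = 0))"
  shows "(\<exists>\<epsilon> :: nat \<Rightarrow> real.
            (\<forall>i\<in>{1..<k}. \<epsilon> i = 0) \<and>
            (\<forall>i\<in>{k..n}. 0 < \<epsilon> i \<and> \<epsilon> i < cmod (A i i) - nek_h n A i \<and>
                 \<epsilon> i > (\<Sum>j\<in>{k..<i}. cmod (A i j) * \<epsilon> j / cmod (A j j))))
       \<and> (\<forall>\<epsilon> :: nat \<Rightarrow> real.
            ((\<forall>i\<in>{1..<k}. \<epsilon> i = 0) \<and>
             (\<forall>i\<in>{k..n}. 0 < \<epsilon> i \<and> \<epsilon> i < cmod (A i i) - nek_h n A i \<and>
                 \<epsilon> i > (\<Sum>j\<in>{k..<i}. cmod (A i j) * \<epsilon> j / cmod (A j j))))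
            \<longrightarrow> (let s = (\<lambda>i. (nek_h n A i + \<epsilon> i) / cmod (A i i)) in
                 (\<forall>i\<in>{1..n}. s i > 0) \<and> sdd n (\<lambda>i j. A i j * complex_of_real (s j))))"
proof -
  let ?zero_tail = "\<lambda>k. 1 \<le> k \<and> k \<le> n \<and> (\<forall>j\<in>{k<..n}. A k j = 0)"
  have "?zero_tail k"
    using LeastI[of ?zero_tail n] assms(1,3) by simp
  then have k: "1 \<le> k"
    by simp
  have head_rows: "\<exists>j\<in>{i<..n}. A i j \<noteq> 0" if "i \<in> {1..<k}" for i
    using not_less_Least[of i ?zero_tail] that assms(3) \<open>?zero_tail k\<close> by auto
  have "\<forall>\<epsilon>. admissible_perturbation n A k \<epsilon> \<longrightarrow>
      (let s = (\<lambda>i. (nek_h n A i + \<epsilon> i) / cmod (A i i)) in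
        (\<forall>i\<in>{1..n}. s i > 0) \<and> sdd n (\<lambda>i j. A i j * complex_of_real (s j)))"
  proof (intro allI impI)
    fix \<epsilon> assume "admissible_perturbation n A k \<epsilon>"
    then show "let s = (\<lambda>i. (nek_h n A i + \<epsilon> i) / cmod (A i i)) in
        (\<forall>i\<in>{1..n}. s i > 0) \<and> sdd n (\<lambda>i j. A i j * complex_of_real (s j))"
      unfolding Let_def by (intro conjI nekrasov_scaling_sdd[OF assms(2) k _ head_rows])
  qed
  with admissible_perturbation_exists[OF assms(2) k] show ?thesis
    unfolding admissible_perturbation_def by (rule conjI)
qed

end
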